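(* For every ${\bf L}\in\mathbb{S}^d_{++}$, $$\lambda_{\max}\big({\bf L}^{1/2}\,\mathrm{diag}({\bf L}^{-1})\,{\bf L}^{1/2}\big)\cdot\det({\bf L})^{1/d}\ge\det(\mathrm{diag}({\bf L}))^{1/d}.$$
   Context: $\mathrm{diag}({\bf A})$ denotes the diagonal matrix having the same diagonal as ${\bf A}$; $\mathbb{S}^d_{++}$ is the set of symmetric positive definite $d\times d$ matrices; $\lambda_{\max}$ the largest eigenvalue. *)

theory Defs
  imports "HOL-Analysis.Analysis"
begin

definition symmetric_mat :: "real^'n^'n \<Rightarrow> bool" where
  "symmetric_mat A \<longleftrightarrow> transpose A = A"

definition pos_def :: "real^'n^'n \<Rightarrow> bool" where
  "pos_def A \<longleftrightarrow> symmetric_mat A \<and> (\<forall>x. x \<noteq> 0 \<longrightarrow> x \<bullet> (A *v x) > 0)"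

definition pos_semidef :: "real^'n^'n \<Rightarrow> bool" where
  "pos_semidef A \<longleftrightarrow> symmetric_mat A \<and> (\<forall>x. x \<bullet> (A *v x) \<ge> 0)"

definition mat_sqrt :: "real^'n^'n \<Rightarrow> real^'n^'n" where
  "mat_sqrt A = (THE S. pos_semidef S \<and> S ** S = A)"

definition diag_part :: "real^'n^'n \<Rightarrow> real^'n^'n" where
  "diag_part A = (\<chi> i j. if i = j then A $ i $ i else 0)"

definition eigenvalues_mat :: "real^'n^'n \<Rightarrow> real set" where
  "eigenvalues_mat A = {c. \<exists>v. v \<noteq> 0 \<and> A *v v = c *\<^sub>R v}"

definition lambda_max :: "real^'n^'n \<Rightarrow> real" where
  "lambda_max A = Max (eigenvalues_mat A)"

end

theory Submission
  imports Defs
begin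

text \<open>Let \<open>S = L\<^sup>1\<^sup>/\<^sup>2\<close>, \<open>N = L\<^sup>-\<^sup>1\<close> and \<open>\<lambda> = \<lambda>\<^sub>m\<^sub>a\<^sub>x(S diag(N) S)\<close>. Evaluating the Rayleigh
  quotient of \<open>S diag(N) S\<close> at \<open>S e\<^sub>i\<close> gives \<open>N\<^sub>i\<^sub>i L\<^sub>i\<^sub>i \<le> \<lambda>\<close> for every \<open>i\<close>, and Hadamard's
  inequality for the positive definite \<open>N\<close> gives \<open>1 / det L = det N \<le> \<Prod>\<^sub>i N\<^sub>i\<^sub>i\<close>. Hence
  \<open>\<Prod>\<^sub>i L\<^sub>i\<^sub>i \<le> (\<Prod>\<^sub>i N\<^sub>i\<^sub>i L\<^sub>i\<^sub>i) det L \<le> \<lambda>\<^sup>d det L\<close>; take \<open>d\<close>-th roots.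
  Square root, inverse, determinant and \<open>\<lambda>\<^sub>m\<^sub>a\<^sub>x\<close> are all computed in an orthonormal eigenbasis,
  which exists by the spectral theorem, obtained by maximising the Rayleigh quotient on invariant
  subspaces.\<close>

lemma linear_coeff_eq_0_if_quadratic_nonpos:
  fixes a b :: real
  assumes "\<And>t. a * t + b * t\<^sup>2 \<le> 0"
  shows "a = 0"
proof (rule ccontr)
  assume "a \<noteq> 0"
  define c where "c = \<bar>b\<bar> + 1"
  have c: "c > 0" "1 + b / c > 0"
    unfolding c_def by (auto simp: field_simps)
  have "a * (a / c) + b * (a / c)\<^sup>2 = a\<^sup>2 / c * (1 + b / c)"
    using c by (simp add: field_simps power2_eq_square)
  also have "\<dots> > 0"
    using \<open>a \<noteq> 0\<close> c by simp
  finally show False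
    using assms[of "a / c"] by simp
qed

lemma symmetric_mat_inner_commute:
  fixes A :: "real^'n^'n"
  assumes "symmetric_mat A"
  shows "x \<bullet> (A *v y) = (A *v x) \<bullet> y"
proof -
  have "x \<bullet> (A *v y) = (transpose A *v x) \<bullet> y"
    by (simp add: dot_lmul_matrix[symmetric])
  then show ?thesis
    using assms unfolding symmetric_mat_def by simp
qed

definition orthonormal :: "'a::real_inner set \<Rightarrow> bool" where
  "orthonormal B \<longleftrightarrow> pairwise orthogonal B \<and> (\<forall>b\<in>B. norm b = 1)"

definition orthonormal_basis :: "'a::euclidean_space set \<Rightarrow> bool" where
  "orthonormal_basis B \<longleftrightarrow> orthonormal B \<and> span B = UNIV"

lemma orthonormal_inner:
  assumes "orthonormal B" "b \<in> B" "c \<in> B"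
  shows "b \<bullet> c = (if b = c then 1 else 0)"
  using assms unfolding orthonormal_def pairwise_def orthogonal_def
  by (auto simp: dot_square_norm)

lemma orthonormal_independent:
  assumes "orthonormal B"
  shows "independent B"
proof -
  have "0 \<notin> B"
    using assms unfolding orthonormal_def by force
  then show ?thesis
    using assms pairwise_orthogonal_independent unfolding orthonormal_def by blast
qed

lemma orthonormal_finite:
  fixes B :: "'a::euclidean_space set"
  assumes "orthonormal B"
  shows "finite B"
  using independent_bound orthonormal_independent[OF assms] by blast

lemma orthonormal_basis_iff_card:
  fixes B :: "'a::euclidean_space set"
  assumes "orthonormal B"
  shows "orthonormal_basis B \<longleftrightarrow> card B = DIM('a)"
  using assms card_eq_dim[of B UNIV] orthonormal_independent[OF assms] orthonormal_finite[OF assms]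
    dim_span_eq_card_independent[of B] span_superset[of B]
  unfolding orthonormal_basis_def by (metis UNIV_I dim_UNIV subsetI top.extremum_uniqueI)

lemma orthonormal_basis_expansion:
  assumes "orthonormal_basis B"
  shows "(\<Sum>b\<in>B. (x \<bullet> b) *\<^sub>R b) = x"
  using assms orthonormal_finite[of B] orthonormal_basis_expand[of B x]
  unfolding orthonormal_basis_def orthonormal_def by auto

lemma orthonormal_coefficient:
  assumes "orthonormal B" "finite B" "b \<in> B"
  shows "b \<bullet> (\<Sum>c\<in>B. f c *\<^sub>R c) = f b"
proof -
  have "b \<bullet> (\<Sum>c\<in>B. f c *\<^sub>R c) = (\<Sum>c\<in>B. if c = b then f b else 0)"
    by (auto simp: inner_sum_right orthonormal_inner[OF assms(1,3)] intro: sum.cong)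
  then show ?thesis
    using assms(2,3) by simp
qed

lemma orthonormal_basis_parseval:
  assumes "orthonormal_basis B"
  shows "x \<bullet> y = (\<Sum>b\<in>B. (x \<bullet> b) * (y \<bullet> b))"
  using arg_cong[OF orthonormal_basis_expansion[OF assms, of y], of "inner x"]
  by (simp add: inner_sum_right mult.commute)

lemma orthonormal_basis_inner_nonzero:
  assumes "orthonormal_basis B" "x \<noteq> 0"
  shows "\<exists>b\<in>B. b \<bullet> x \<noteq> 0"
proof (rule ccontr)
  assume "\<not> (\<exists>b\<in>B. b \<bullet> x \<noteq> 0)"
  then have "(\<Sum>b\<in>B. (x \<bullet> b) *\<^sub>R b) = 0"
    by (simp add: inner_commute)
  with assms show False
    using orthonormal_basis_expansion[OF assms(1), of x] by simp
qed

section \<open>The spectral theorem\<close>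

definition eigenbasis :: "real^'n^'n \<Rightarrow> (real^'n) set \<Rightarrow> bool" where
  "eigenbasis A B \<longleftrightarrow> orthonormal_basis B \<and> (\<forall>b\<in>B. A *v b = (b \<bullet> (A *v b)) *\<^sub>R b)"

lemma rayleigh_max_stationary:
  fixes A :: "real^'n^'n"
  assumes sym: "symmetric_mat A" and W: "subspace W" and "v \<in> W" "w \<in> W" and v1: "v \<bullet> v = 1"
    and max: "\<And>u. u \<in> W \<Longrightarrow> u \<bullet> (A *v u) \<le> (v \<bullet> (A *v v)) * (u \<bullet> u)"
  shows "w \<bullet> (A *v v) = (v \<bullet> (A *v v)) * (v \<bullet> w)"
proof -
  define \<mu> where "\<mu> = v \<bullet> (A *v v)"
  have "(2 * (w \<bullet> (A *v v) - \<mu> * (v \<bullet> w))) * t + (w \<bullet> (A *v w) - \<mu> * (w \<bullet> w)) * t\<^sup>2 \<le> 0" for t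
  proof -
    have "v + t *\<^sub>R w \<in> W"
      using W \<open>v \<in> W\<close> \<open>w \<in> W\<close> by (simp add: subspace_add subspace_scale)
    from max[OF this] show ?thesis
      using v1 symmetric_mat_inner_commute[OF sym, of v w] unfolding \<mu>_def
      by (simp add: matrix_vector_right_distrib matrix_vector_mult_scaleR inner_add_left
          inner_add_right inner_commute algebra_simps power2_eq_square)
  qed
  then have "2 * (w \<bullet> (A *v v) - \<mu> * (v \<bullet> w)) = 0"
    by (rule linear_coeff_eq_0_if_quadratic_nonpos)
  then show ?thesis
    unfolding \<mu>_def by simp
qed

text \<open>The eigenvector is a maximiser of the Rayleigh quotient on the unit sphere of \<open>W\<close>.\<close>

lemma symmetric_mat_invariant_subspace_eigenvector:
  fixes A :: "real^'n^'n"
  assumes sym: "symmetric_mat A" and W: "subspace W" and inv: "\<And>w. w \<in> W \<Longrightarrow> A *v w \<in> W"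
    and "x \<in> W" "x \<noteq> 0"
  obtains v where "v \<in> W" "norm v = 1" "A *v v = (v \<bullet> (A *v v)) *\<^sub>R v"
proof -
  define K where "K = W \<inter> sphere 0 1"
  have "compact K"
    unfolding K_def using closed_subspace[OF W] by (simp add: closed_Int_compact)
  moreover have "x /\<^sub>R norm x \<in> K"
    using W \<open>x \<in> W\<close> \<open>x \<noteq> 0\<close> unfolding K_def by (simp add: subspace_scale)
  ultimately obtain v where "v \<in> K" and vmax: "\<And>y. y \<in> K \<Longrightarrow> y \<bullet> (A *v y) \<le> v \<bullet> (A *v v)"
    using continuous_attains_sup[of K "\<lambda>v. v \<bullet> (A *v v)"] by (force intro: continuous_intros)
  define \<mu> where "\<mu> = v \<bullet> (A *v v)"
  have vW: "v \<in> W" and v1: "norm v = 1"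
    using \<open>v \<in> K\<close> unfolding K_def by auto
  have max: "u \<bullet> (A *v u) \<le> \<mu> * (u \<bullet> u)" if "u \<in> W" for u
  proof (cases "u = 0")
    case False
    have "u /\<^sub>R norm u \<in> K"
      using W \<open>u \<in> W\<close> False unfolding K_def by (simp add: subspace_scale)
    have "(u \<bullet> (A *v u)) / (norm u)\<^sup>2 = (u /\<^sub>R norm u) \<bullet> (A *v (u /\<^sub>R norm u))"
      using False by (simp add: matrix_vector_mult_scaleR power2_eq_square field_simps)
    also have "\<dots> \<le> \<mu>"
      using vmax[OF \<open>u /\<^sub>R norm u \<in> K\<close>] unfolding \<mu>_def .
    finally have "(u \<bullet> (A *v u)) / (norm u)\<^sup>2 \<le> \<mu>" .
    then show ?thesis
      using False by (simp add: divide_le_eq dot_square_norm mult.commute)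
  qed simp
  define z where "z = A *v v - \<mu> *\<^sub>R v"
  have "z \<in> W"
    unfolding z_def using W inv[OF vW] vW by (simp add: subspace_diff subspace_scale)
  have stat: "w \<bullet> (A *v v) = \<mu> * (v \<bullet> w)" if "w \<in> W" for w
    using rayleigh_max_stationary[OF sym W vW that _ max[unfolded \<mu>_def]] v1 unfolding \<mu>_def
    by (simp add: dot_square_norm)
  have "z \<bullet> z = z \<bullet> (A *v v) - \<mu> * (z \<bullet> v)"
    unfolding z_def by (simp add: inner_diff_right)
  also have "\<dots> = 0"
    using stat[OF \<open>z \<in> W\<close>] by (simp add: inner_commute)
  finally have "A *v v = \<mu> *\<^sub>R v"
    unfolding z_def by simp
  then show ?thesis
    using that vW v1 unfolding \<mu>_def by simp
qed

lemma orthonormal_eigenvectors_extend: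
  fixes A :: "real^'n^'n"
  assumes sym: "symmetric_mat A" and B: "orthonormal B" and card: "card B < CARD('n)"
    and eig: "\<And>b. b \<in> B \<Longrightarrow> A *v b = (b \<bullet> (A *v b)) *\<^sub>R b"
  obtains v where "v \<notin> B" "orthonormal (insert v B)" "A *v v = (v \<bullet> (A *v v)) *\<^sub>R v"
proof -
  define W where "W = {w. \<forall>b\<in>B. orthogonal b w}"
  have W: "subspace W"
    unfolding W_def by (rule subspace_orthogonal_to_vectors)
  have inv: "A *v w \<in> W" if "w \<in> W" for w
  proof -
    have "b \<bullet> (A *v w) = (b \<bullet> (A *v b)) * (b \<bullet> w)" if "b \<in> B" for b
      using symmetric_mat_inner_commute[OF sym, of b w] eig[OF that] by (metis inner_scaleR_left)
    then show ?thesis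
      using \<open>w \<in> W\<close> unfolding W_def orthogonal_def by simp
  qed
  have "dim B < DIM(real^'n)"
    using card by (simp add: dim_eq_card_independent orthonormal_independent[OF B])
  then obtain x where "x \<noteq> 0" "\<And>y. y \<in> span B \<Longrightarrow> orthogonal x y"
    by (rule orthogonal_to_subspace_exists) blast
  then have "x \<in> W"
    unfolding W_def by (auto simp: span_base orthogonal_commute)
  then obtain v where v: "v \<in> W" "norm v = 1" "A *v v = (v \<bullet> (A *v v)) *\<^sub>R v"
    using symmetric_mat_invariant_subspace_eigenvector[OF sym W inv] \<open>x \<noteq> 0\<close> by blast
  have "v \<notin> B"
  proof
    assume "v \<in> B"
    then have "v \<bullet> v = 0"
      using v(1) unfolding W_def orthogonal_def by blast
    with v(2) show False
      by simp
  qed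
  moreover have "orthonormal (insert v B)"
    using B v unfolding orthonormal_def W_def
    by (auto simp: pairwise_insert orthogonal_commute)
  ultimately show ?thesis
    using that v by blast
qed

theorem symmetric_mat_eigenbasis:
  fixes A :: "real^'n^'n"
  assumes sym: "symmetric_mat A"
  obtains B where "eigenbasis A B"
proof -
  have "\<exists>B. orthonormal B \<and> card B = k \<and> (\<forall>b\<in>B. A *v b = (b \<bullet> (A *v b)) *\<^sub>R b)"
    if "k \<le> CARD('n)" for k
    using that
  proof (induction k)
    case 0
    show ?case
      by (rule exI[of _ "{}"]) (simp add: orthonormal_def)
  next
    case (Suc k)
    then obtain B where B: "orthonormal B" "card B = k" "\<forall>b\<in>B. A *v b = (b \<bullet> (A *v b)) *\<^sub>R b"
      by auto
    moreover have "card B < CARD('n)"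
      using Suc.prems B(2) by simp
    ultimately obtain v where "v \<notin> B" "orthonormal (insert v B)"
        "A *v v = (v \<bullet> (A *v v)) *\<^sub>R v"
      using orthonormal_eigenvectors_extend[OF sym] by blast
    then show ?case
      using B orthonormal_finite[OF B(1)] by (intro exI[of _ "insert v B"]) auto
  qed
  then obtain B where "orthonormal B" "card B = CARD('n)" "\<forall>b\<in>B. A *v b = (b \<bullet> (A *v b)) *\<^sub>R b"
    by blast
  then show ?thesis
    using that orthonormal_basis_iff_card[of B] unfolding eigenbasis_def by simp
qed

definition spectral_mat :: "(real^'n) set \<Rightarrow> (real^'n \<Rightarrow> real) \<Rightarrow> real^'n^'n" where
  "spectral_mat B f = (\<chi> i j. \<Sum>b\<in>B. f b * b$i * b$j)"

lemma spectral_mat_mult_vec: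
  "spectral_mat B f *v x = (\<Sum>b\<in>B. (f b * (b \<bullet> x)) *\<^sub>R b)"
proof -
  have "(spectral_mat B f *v x) $ i = (\<Sum>b\<in>B. \<Sum>j\<in>UNIV. f b * b$i * b$j * x$j)" for i
    unfolding spectral_mat_def matrix_vector_mult_def
    by (simp add: sum_distrib_right sum.swap[of _ UNIV B])
  then show ?thesis
    by (simp add: vec_eq_iff sum_component inner_vec_def sum_distrib_left mult_ac)
qed

lemma spectral_mat_cong:
  assumes "\<And>b. b \<in> B \<Longrightarrow> f b = g b"
  shows "spectral_mat B f = spectral_mat B g"
  unfolding spectral_mat_def using assms by (simp cong: sum.cong)

lemma symmetric_spectral_mat: "symmetric_mat (spectral_mat B f)"
  unfolding symmetric_mat_def spectral_mat_def transpose_def by (simp add: vec_eq_iff mult_ac)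

lemma spectral_mat_quadratic_form:
  "x \<bullet> (spectral_mat B f *v x) = (\<Sum>b\<in>B. f b * (b \<bullet> x)\<^sup>2)"
  by (simp add: spectral_mat_mult_vec inner_sum_right inner_commute power2_eq_square mult_ac)

lemma spectral_mat_coefficient:
  assumes "orthonormal_basis B" "b \<in> B"
  shows "b \<bullet> (spectral_mat B f *v x) = f b * (b \<bullet> x)"
  using assms orthonormal_coefficient[of B b] orthonormal_finite[of B]
  unfolding spectral_mat_mult_vec orthonormal_basis_def by simp

lemma spectral_mat_mult_basis:
  assumes "orthonormal B" "finite B" "b \<in> B"
  shows "spectral_mat B f *v b = f b *\<^sub>R b"
proof -
  have "spectral_mat B f *v b = (\<Sum>c\<in>B. if c = b then f b *\<^sub>R b else 0)"
    unfolding spectral_mat_mult_vec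
    by (rule sum.cong) (auto simp: orthonormal_inner[OF assms(1) _ assms(3)])
  then show ?thesis
    using assms(2,3) by simp
qed

lemma eigenbasis_eq_spectral_mat:
  assumes "eigenbasis A B"
  shows "A = spectral_mat B (\<lambda>b. b \<bullet> (A *v b))"
proof -
  have "A *v x = spectral_mat B (\<lambda>b. b \<bullet> (A *v b)) *v x" for x
  proof -
    have "A *v x = A *v (\<Sum>b\<in>B. (b \<bullet> x) *\<^sub>R b)"
      using assms orthonormal_basis_expansion[of B x] unfolding eigenbasis_def
      by (simp add: inner_commute)
    also have "\<dots> = (\<Sum>b\<in>B. (b \<bullet> x) *\<^sub>R (A *v b))"
      by (simp add: vec.sum matrix_vector_mult_scaleR)
    also have "\<dots> = spectral_mat B (\<lambda>b. b \<bullet> (A *v b)) *v x"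
      unfolding spectral_mat_mult_vec
    proof (rule sum.cong)
      fix b
      assume "b \<in> B"
      then have "A *v b = (b \<bullet> (A *v b)) *\<^sub>R b"
        using assms unfolding eigenbasis_def by blast
      then show "(b \<bullet> x) *\<^sub>R (A *v b) = (b \<bullet> (A *v b) * (b \<bullet> x)) *\<^sub>R b"
        by (metis scaleR_scaleR mult.commute)
    qed simp
    finally show ?thesis .
  qed
  then show ?thesis
    by (subst matrix_eq) blast
qed

lemma spectral_mat_mult:
  assumes "orthonormal_basis B"
  shows "spectral_mat B f ** spectral_mat B g = spectral_mat B (\<lambda>b. f b * g b)"
proof -
  have "spectral_mat B f *v (spectral_mat B g *v x) = spectral_mat B (\<lambda>b. f b * g b) *v x" for x
    unfolding spectral_mat_mult_vec[of B f]
    by (simp add: spectral_mat_coefficient[OF assms] spectral_mat_mult_vec[of B "\<lambda>b. f b * g b"]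
        mult.assoc cong: sum.cong)
  then show ?thesis
    by (simp add: matrix_eq matrix_vector_mul_assoc[symmetric])
qed

lemma spectral_mat_one:
  assumes "orthonormal_basis B"
  shows "spectral_mat B (\<lambda>_. 1) = mat 1"
  using orthonormal_basis_expansion[OF assms]
  by (simp add: matrix_eq spectral_mat_mult_vec inner_commute)

lemma pos_semidef_spectral_mat:
  assumes "\<And>b. b \<in> B \<Longrightarrow> f b \<ge> 0"
  shows "pos_semidef (spectral_mat B f)"
  unfolding pos_semidef_def spectral_mat_quadratic_form
  using assms symmetric_spectral_mat by (auto intro: sum_nonneg)

lemma pos_def_spectral_mat:
  fixes B :: "(real^'n) set"
  assumes B: "orthonormal_basis B" and pos: "\<And>b. b \<in> B \<Longrightarrow> f b > 0"
  shows "pos_def (spectral_mat B f)"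
  unfolding pos_def_def spectral_mat_quadratic_form
proof (intro conjI allI impI symmetric_spectral_mat)
  fix x :: "real^'n"
  assume "x \<noteq> 0"
  have "\<exists>b\<in>B. b \<bullet> x \<noteq> 0"
    by (rule orthonormal_basis_inner_nonzero[OF B \<open>x \<noteq> 0\<close>])
  then obtain b where "b \<in> B" "b \<bullet> x \<noteq> 0"
    by blast
  have "finite B"
    using B orthonormal_finite unfolding orthonormal_basis_def by blast
  then show "0 < (\<Sum>b\<in>B. f b * (b \<bullet> x)\<^sup>2)"
  proof (rule sum_pos2[OF _ \<open>b \<in> B\<close>])
    show "0 < f b * (b \<bullet> x)\<^sup>2"
      using pos[OF \<open>b \<in> B\<close>] \<open>b \<bullet> x \<noteq> 0\<close> by simp
  qed (simp add: less_imp_le pos)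
qed

lemma det_spectral_mat:
  fixes B :: "(real^'n) set"
  assumes B: "orthonormal_basis B"
  shows "det (spectral_mat B f) = (\<Prod>b\<in>B. f b)"
proof -
  have ON: "orthonormal B" and "finite B" "card B = CARD('n)"
    using B orthonormal_finite[of B] orthonormal_basis_iff_card[of B]
    unfolding orthonormal_basis_def by auto
  then obtain h where h: "bij_betw h (UNIV :: 'n set) B"
    using finite_same_card_bij[of "UNIV :: 'n set" B] by auto
  then have hB: "h j \<in> B" and h_inj: "h i = h j \<longleftrightarrow> i = j" for i j
    by (auto simp: bij_betw_def inj_on_def)
  define P :: "real^'n^'n" where "P = (\<chi> i j. h j $ i)"
  define D :: "real^'n^'n" where "D = (\<chi> i j. if i = j then f (h j) else 0)"
  have "transpose P ** P = mat 1"
    using orthonormal_inner[OF ON hB hB] h_inj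
    by (simp add: P_def vec_eq_iff matrix_matrix_mult_def transpose_def mat_def inner_vec_def)
  then have "det P * det P = 1"
    by (metis det_I det_mul det_transpose)
  moreover have "spectral_mat B f ** P = P ** D"
  proof -
    have "(spectral_mat B f ** P) $ i $ j = (spectral_mat B f *v h j) $ i" for i j
      by (simp add: P_def matrix_matrix_mult_def matrix_vector_mult_def)
    then show ?thesis
      using spectral_mat_mult_basis[OF ON \<open>finite B\<close> hB]
      by (simp add: P_def D_def vec_eq_iff matrix_matrix_mult_def if_distrib mult.commute cong: if_cong)
  qed
  ultimately have "det (spectral_mat B f) = det D"
    by (metis det_mul mult.commute mult_cancel_right mult_zero_left zero_neq_one)
  also have "\<dots> = (\<Prod>j\<in>UNIV. f (h j))"
    unfolding D_def by (subst det_diagonal) auto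
  also have "\<dots> = (\<Prod>b\<in>B. f b)"
    using prod.reindex_bij_betw[OF h] by simp
  finally show ?thesis .
qed

lemma det_eigenbasis:
  assumes "eigenbasis A B"
  shows "det A = (\<Prod>b\<in>B. b \<bullet> (A *v b))"
  using assms det_spectral_mat eigenbasis_eq_spectral_mat unfolding eigenbasis_def by metis

lemma eigenvalues_mat_eigenbasis:
  assumes A: "eigenbasis A B"
  shows "eigenvalues_mat A = (\<lambda>b. b \<bullet> (A *v b)) ` B"
proof (intro equalityI subsetI)
  fix c
  assume "c \<in> eigenvalues_mat A"
  then obtain v where "v \<noteq> 0" and v: "A *v v = c *\<^sub>R v"
    unfolding eigenvalues_mat_def by auto
  obtain b where "b \<in> B" "b \<bullet> v \<noteq> 0"
    using orthonormal_basis_inner_nonzero[OF _ \<open>v \<noteq> 0\<close>] A unfolding eigenbasis_def by blast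
  moreover have "c * (b \<bullet> v) = (b \<bullet> (A *v b)) * (b \<bullet> v)"
    using spectral_mat_coefficient[of B b "\<lambda>b. b \<bullet> (A *v b)" v] A \<open>b \<in> B\<close> v
    unfolding eigenbasis_def by (metis eigenbasis_eq_spectral_mat[OF A] inner_scaleR_right)
  ultimately show "c \<in> (\<lambda>b. b \<bullet> (A *v b)) ` B"
    by simp
next
  fix c
  assume "c \<in> (\<lambda>b. b \<bullet> (A *v b)) ` B"
  moreover have "b \<noteq> 0" if "b \<in> B" for b
    using A that unfolding eigenbasis_def orthonormal_basis_def orthonormal_def by force
  ultimately show "c \<in> eigenvalues_mat A"
    using A unfolding eigenvalues_mat_def eigenbasis_def by force
qed

lemma lambda_max_rayleigh:
  fixes A :: "real^'n^'n"
  assumes "symmetric_mat A"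
  shows "x \<bullet> (A *v x) \<le> lambda_max A * (x \<bullet> x)"
proof -
  obtain B where A: "eigenbasis A B"
    using symmetric_mat_eigenbasis[OF assms] by blast
  then have B: "orthonormal_basis B" and "finite B"
    using orthonormal_finite unfolding eigenbasis_def orthonormal_basis_def by auto
  have le: "b \<bullet> (A *v b) \<le> lambda_max A" if "b \<in> B" for b
    unfolding lambda_max_def eigenvalues_mat_eigenbasis[OF A] using \<open>finite B\<close> that by simp
  have "x \<bullet> (A *v x) = (\<Sum>b\<in>B. (b \<bullet> (A *v b)) * (b \<bullet> x)\<^sup>2)"
    by (subst eigenbasis_eq_spectral_mat[OF A]) (rule spectral_mat_quadratic_form)
  also have "\<dots> \<le> (\<Sum>b\<in>B. lambda_max A * (b \<bullet> x)\<^sup>2)"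
    by (intro sum_mono mult_right_mono le) simp_all
  also have "\<dots> = lambda_max A * (x \<bullet> x)"
    by (simp add: orthonormal_basis_parseval[OF B, of x x] sum_distrib_left inner_commute power2_eq_square)
  finally show ?thesis .
qed

lemma pos_semidef_eigenvalue_nonneg:
  assumes "pos_semidef A" "eigenbasis A B" "b \<in> B"
  shows "b \<bullet> (A *v b) \<ge> 0"
  using assms unfolding pos_semidef_def by blast

lemma pos_def_eigenvalue_pos:
  assumes "pos_def A" "eigenbasis A B" "b \<in> B"
  shows "b \<bullet> (A *v b) > 0"
proof -
  have "b \<noteq> 0"
    using assms(2,3) unfolding eigenbasis_def orthonormal_basis_def orthonormal_def by force
  then show ?thesis
    using assms(1) unfolding pos_def_def by blast
qed

lemma matrix_vector_mult_axis_component: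
  fixes A :: "real^'n^'n"
  shows "(A *v axis j 1) $ k = A $ k $ j"
  by (simp add: matrix_vector_mult_def axis_def if_distrib cong: if_cong)

lemma pos_def_diag_pos:
  assumes "pos_def A"
  shows "A $ i $ i > 0"
proof -
  have "axis i 1 \<bullet> (A *v axis i 1) > 0"
    using assms unfolding pos_def_def by (simp add: axis_eq_0_iff)
  then show ?thesis
    by (simp add: inner_axis' matrix_vector_mult_axis_component)
qed

lemma pos_def_imp_pos_semidef:
  assumes "pos_def A"
  shows "pos_semidef A"
  using assms unfolding pos_def_def pos_semidef_def by (metis inner_zero_left order_refl less_imp_le)

lemma pos_semidef_quadratic_form_eq_0:
  assumes psd: "pos_semidef S" and "x \<bullet> (S *v x) = 0"
  shows "S *v x = 0"
proof -
  have sym: "symmetric_mat S"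
    using psd unfolding pos_semidef_def by blast
  have "y \<bullet> (S *v x) = 0" for y
  proof -
    have "(- 2 * (y \<bullet> (S *v x))) * t + (- (y \<bullet> (S *v y))) * t\<^sup>2 \<le> 0" for t
    proof -
      have "0 \<le> (x + t *\<^sub>R y) \<bullet> (S *v (x + t *\<^sub>R y))"
        using psd unfolding pos_semidef_def by blast
      then show ?thesis
        using \<open>x \<bullet> (S *v x) = 0\<close> symmetric_mat_inner_commute[OF sym, of x y]
        by (simp add: matrix_vector_right_distrib matrix_vector_mult_scaleR inner_add_left
            inner_add_right inner_commute algebra_simps power2_eq_square)
    qed
    then show ?thesis
      using linear_coeff_eq_0_if_quadratic_nonpos by fastforce
  qed
  from this[of "S *v x"] show ?thesis
    by simp
qed

text \<open>If \<open>S\<^sup>2 = T\<^sup>2\<close> and \<open>(S - T) b = \<mu> b\<close>, then \<open>0 = b\<^sup>T (S (S - T) + (S - T) T) b = \<mu> (b\<^sup>T S b + b\<^sup>T T b)\<close>,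
  so \<open>\<mu> = 0\<close> unless \<open>S b = T b = 0\<close>.\<close>

lemma pos_semidef_sqrt_unique:
  fixes S T :: "real^'n^'n"
  assumes S: "pos_semidef S" and T: "pos_semidef T" and eq: "S ** S = T ** T"
  shows "S = T"
proof -
  define D where "D = S - T"
  have "symmetric_mat D"
    using S T unfolding D_def pos_semidef_def symmetric_mat_def by (simp add: transpose_def vec_eq_iff)
  then obtain B where B: "eigenbasis D B"
    by (rule symmetric_mat_eigenbasis)
  have D0: "D *v b = 0" if "b \<in> B" for b
  proof -
    define \<mu> where "\<mu> = b \<bullet> (D *v b)"
    have Db: "D *v b = \<mu> *\<^sub>R b"
      using B that unfolding eigenbasis_def \<mu>_def by blast
    have "S *v (D *v b) + D *v (T *v b) = S *v (S *v b) - T *v (T *v b)"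
      unfolding D_def by (simp add: matrix_vector_mult_diff_rdistrib matrix_vector_mult_diff_distrib)
    also have "\<dots> = 0"
      using eq by (simp add: matrix_vector_mul_assoc)
    finally have "b \<bullet> (S *v (D *v b)) + b \<bullet> (D *v (T *v b)) = 0"
      by (metis inner_add_right inner_zero_right)
    moreover have "b \<bullet> (D *v (T *v b)) = \<mu> * (b \<bullet> (T *v b))"
      using symmetric_mat_inner_commute[OF \<open>symmetric_mat D\<close>, of b "T *v b"] Db by simp
    ultimately have "\<mu> * (b \<bullet> (S *v b) + b \<bullet> (T *v b)) = 0"
      by (simp add: Db matrix_vector_mult_scaleR algebra_simps)
    moreover have "b \<bullet> (S *v b) \<ge> 0" "b \<bullet> (T *v b) \<ge> 0"
      using S T unfolding pos_semidef_def by auto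
    ultimately have "\<mu> = 0 \<or> S *v b = 0 \<and> T *v b = 0"
      using pos_semidef_quadratic_form_eq_0[OF S] pos_semidef_quadratic_form_eq_0[OF T]
      by (metis add_nonneg_eq_0_iff mult_eq_0_iff)
    then show ?thesis
      using Db unfolding D_def by (auto simp: matrix_vector_mult_diff_rdistrib)
  qed
  have "D = spectral_mat B (\<lambda>b. b \<bullet> (D *v b))"
    by (rule eigenbasis_eq_spectral_mat[OF B])
  also have "\<dots> = spectral_mat B (\<lambda>_. 0)"
    by (rule spectral_mat_cong) (simp add: D0)
  finally show ?thesis
    unfolding D_def spectral_mat_def by (simp add: vec_eq_iff)
qed

lemma pos_semidef_sqrt_ex1:
  fixes L :: "real^'n^'n"
  assumes L: "pos_semidef L"
  shows "\<exists>!S. pos_semidef S \<and> S ** S = L"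
proof -
  obtain B where B: "eigenbasis L B"
    using symmetric_mat_eigenbasis L unfolding pos_semidef_def by blast
  then have ONB: "orthonormal_basis B"
    unfolding eigenbasis_def by blast
  define S where "S = spectral_mat B (\<lambda>b. sqrt (b \<bullet> (L *v b)))"
  have "pos_semidef S"
    unfolding S_def by (rule pos_semidef_spectral_mat) (simp add: pos_semidef_eigenvalue_nonneg[OF L B])
  moreover have "S ** S = L"
  proof -
    have "S ** S = spectral_mat B (\<lambda>b. sqrt (b \<bullet> (L *v b)) * sqrt (b \<bullet> (L *v b)))"
      unfolding S_def by (rule spectral_mat_mult[OF ONB])
    also have "\<dots> = spectral_mat B (\<lambda>b. b \<bullet> (L *v b))"
      by (rule spectral_mat_cong) (simp add: pos_semidef_eigenvalue_nonneg[OF L B])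
    finally show ?thesis
      using eigenbasis_eq_spectral_mat[OF B] by simp
  qed
  ultimately show ?thesis
    using pos_semidef_sqrt_unique by blast
qed

lemma pos_semidef_mat_sqrt:
  assumes "pos_semidef L"
  shows "pos_semidef (mat_sqrt L)"
  using theI'[OF pos_semidef_sqrt_ex1[OF assms]] unfolding mat_sqrt_def by blast

lemma mat_sqrt_mult_self:
  assumes "pos_semidef L"
  shows "mat_sqrt L ** mat_sqrt L = L"
  using theI'[OF pos_semidef_sqrt_ex1[OF assms]] unfolding mat_sqrt_def by blast

lemma matrix_inv_eqI:
  fixes A N :: "'a::field^'n^'n"
  assumes AN: "A ** N = mat 1"
  shows "matrix_inv A = N"
proof -
  have NA: "N ** A = mat 1"
    using AN matrix_left_right_inverse by blast
  then have "\<exists>X. A ** X = mat 1 \<and> X ** A = mat 1"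
    using AN by blast
  then have inv: "A ** matrix_inv A = mat 1"
    unfolding matrix_inv_def by (rule someI_ex[THEN conjunct1])
  have "matrix_inv A = (N ** A) ** matrix_inv A"
    using NA by (simp add: matrix_mul_lid)
  also have "\<dots> = N"
    using inv by (simp add: matrix_mul_assoc[symmetric] matrix_mul_rid)
  finally show ?thesis .
qed

lemma pos_def_matrix_inv_eq:
  assumes L: "pos_def L" and B: "eigenbasis L B"
  shows "matrix_inv L = spectral_mat B (\<lambda>b. 1 / (b \<bullet> (L *v b)))"
proof (rule matrix_inv_eqI)
  have ONB: "orthonormal_basis B"
    using B unfolding eigenbasis_def by blast
  have "L ** spectral_mat B (\<lambda>b. 1 / (b \<bullet> (L *v b)))
      = spectral_mat B (\<lambda>b. (b \<bullet> (L *v b)) * (1 / (b \<bullet> (L *v b))))"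
    by (subst (1) eigenbasis_eq_spectral_mat[OF B]) (rule spectral_mat_mult[OF ONB])
  also have "\<dots> = spectral_mat B (\<lambda>_. 1)"
  proof (rule spectral_mat_cong)
    fix b
    assume "b \<in> B"
    then have "b \<bullet> (L *v b) \<noteq> 0"
      using pos_def_eigenvalue_pos[OF L B] by fastforce
    then show "b \<bullet> (L *v b) * (1 / (b \<bullet> (L *v b))) = 1"
      by simp
  qed
  finally show "L ** spectral_mat B (\<lambda>b. 1 / (b \<bullet> (L *v b))) = mat 1"
    using spectral_mat_one[OF ONB] by simp
qed

lemma pos_def_matrix_inv:
  assumes "pos_def L"
  shows "pos_def (matrix_inv L)"
proof -
  obtain B where B: "eigenbasis L B"
    using symmetric_mat_eigenbasis assms unfolding pos_def_def by blast
  show ?thesis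
    unfolding pos_def_matrix_inv_eq[OF assms B] using B pos_def_eigenvalue_pos[OF assms B]
    unfolding eigenbasis_def by (intro pos_def_spectral_mat) auto
qed

lemma pos_def_det_pos:
  assumes "pos_def L"
  shows "det L > 0"
proof -
  obtain B where B: "eigenbasis L B"
    using symmetric_mat_eigenbasis assms unfolding pos_def_def by blast
  then show ?thesis
    using pos_def_eigenvalue_pos[OF assms B] by (simp add: det_eigenbasis prod_pos)
qed

lemma pos_def_det_matrix_inv:
  assumes "pos_def L"
  shows "det (matrix_inv L) = 1 / det L"
proof -
  obtain B where B: "eigenbasis L B"
    using symmetric_mat_eigenbasis assms unfolding pos_def_def by blast
  then have "orthonormal_basis B"
    unfolding eigenbasis_def by blast
  then show ?thesis
    by (simp add: pos_def_matrix_inv_eq[OF assms B] det_spectral_mat det_eigenbasis[OF B] prod_dividef)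
qed

section \<open>Hadamard's inequality\<close>

lemma orthonormal_basis_sum_component_sq:
  fixes B :: "(real^'n) set"
  assumes "orthonormal_basis B"
  shows "(\<Sum>b\<in>B. (b $ i)\<^sup>2) = 1"
  using orthonormal_basis_parseval[OF assms, of "axis i 1" "axis i 1"]
  by (simp add: inner_axis' inner_axis_axis power2_eq_square)

lemma unit_vector_sum_component_sq:
  fixes b :: "real^'n"
  assumes "norm b = 1"
  shows "(\<Sum>i\<in>UNIV. (b $ i)\<^sup>2) = 1"
proof -
  have "b \<bullet> b = 1"
    using assms by (simp add: dot_square_norm)
  then show ?thesis
    by (simp add: inner_vec_def power2_eq_square)
qed

text \<open>For \<open>N = \<Sum>\<^sub>b e\<^sub>b b b\<^sup>T\<close> the weights \<open>(b\<^sub>i)\<^sup>2\<close> sum to 1 both over \<open>b\<close> and over \<open>i\<close>;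
  concavity of \<open>ln\<close> gives \<open>\<Sum>\<^sub>b (b\<^sub>i)\<^sup>2 ln e\<^sub>b \<le> ln N\<^sub>i\<^sub>i\<close>; summing over \<open>i\<close> yields \<open>ln det N \<le> \<Sum>\<^sub>i ln N\<^sub>i\<^sub>i\<close>.\<close>

theorem hadamard_pos_def:
  fixes N :: "real^'n^'n"
  assumes pd: "pos_def N"
  shows "det N \<le> (\<Prod>i\<in>UNIV. N $ i $ i)"
proof -
  obtain B where B: "eigenbasis N B"
    using symmetric_mat_eigenbasis pd unfolding pos_def_def by blast
  define e where "e = (\<lambda>b. b \<bullet> (N *v b))"
  have N: "N = spectral_mat B e"
    unfolding e_def by (rule eigenbasis_eq_spectral_mat[OF B])
  have ONB: "orthonormal_basis B" and "finite B"
    using B orthonormal_finite unfolding eigenbasis_def orthonormal_basis_def by auto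
  have e_pos: "e b > 0" if "b \<in> B" for b
    unfolding e_def using pos_def_eigenvalue_pos[OF pd B that] .
  have weights: "(\<Sum>b\<in>B. (b $ i)\<^sup>2) = 1" for i
    by (rule orthonormal_basis_sum_component_sq[OF ONB])
  have jensen: "(\<Sum>b\<in>B. (b $ i)\<^sup>2 * ln (e b)) \<le> ln (N $ i $ i)" for i
  proof -
    have "B \<noteq> {}"
      using weights[of i] by auto
    then have "(\<Sum>b\<in>B. (b $ i)\<^sup>2 * ln (e b)) \<le> ln (\<Sum>b\<in>B. (b $ i)\<^sup>2 *\<^sub>R e b)"
      using e_pos by (intro concave_on_sum[OF \<open>finite B\<close> _ ln_concave weights]) auto
    also have "(\<Sum>b\<in>B. (b $ i)\<^sup>2 *\<^sub>R e b) = N $ i $ i"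
      unfolding N spectral_mat_def by (simp add: power2_eq_square mult_ac)
    finally show ?thesis .
  qed
  have "ln (det N) = ln (\<Prod>b\<in>B. e b)"
    using det_eigenbasis[OF B] unfolding e_def by simp
  also have "\<dots> = (\<Sum>b\<in>B. ln (e b))"
    using e_pos by (intro ln_prod[OF \<open>finite B\<close>]) force
  also have "\<dots> = (\<Sum>b\<in>B. \<Sum>i\<in>UNIV. (b $ i)\<^sup>2 * ln (e b))"
    using ONB unfolding orthonormal_basis_def orthonormal_def
    by (simp add: sum_distrib_right[symmetric] unit_vector_sum_component_sq)
  also have "\<dots> = (\<Sum>i\<in>UNIV. \<Sum>b\<in>B. (b $ i)\<^sup>2 * ln (e b))"
    by (rule sum.swap)
  also have "\<dots> \<le> (\<Sum>i\<in>UNIV. ln (N $ i $ i))"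
    by (intro sum_mono jensen)
  also have "\<dots> = ln (\<Prod>i\<in>UNIV. N $ i $ i)"
    using pos_def_diag_pos[OF pd] by (simp add: ln_prod less_imp_neq[symmetric])
  finally show ?thesis
    using pos_def_det_pos[OF pd] pos_def_diag_pos[OF pd] by (simp add: prod_pos)
qed

lemma hadamard_matrix_inv:
  fixes L :: "real^'n^'n"
  assumes "pos_def L"
  shows "1 \<le> (\<Prod>i\<in>UNIV. matrix_inv L $ i $ i) * det L"
  using hadamard_pos_def[OF pos_def_matrix_inv[OF assms]] pos_def_det_matrix_inv[OF assms]
    pos_def_det_pos[OF assms] by (simp add: divide_le_eq)

lemma det_diag_part:
  fixes A :: "real^'n^'n"
  shows "det (diag_part A) = (\<Prod>i\<in>UNIV. A $ i $ i)"
  unfolding diag_part_def by (subst det_diagonal) auto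

lemma symmetric_diag_part: "symmetric_mat (diag_part A)"
  unfolding symmetric_mat_def diag_part_def transpose_def by (simp add: vec_eq_iff)

lemma diag_part_quadratic_form:
  fixes A :: "real^'n^'n"
  shows "z \<bullet> (diag_part A *v z) = (\<Sum>k\<in>UNIV. A $ k $ k * (z $ k)\<^sup>2)"
proof -
  have "diag_part A *v z = (\<chi> k. A $ k $ k * z $ k)"
    unfolding diag_part_def matrix_vector_mult_def
    by (simp add: vec_eq_iff if_distrib[of "\<lambda>x. x * _"] cong: if_cong)
  then show ?thesis
    by (simp add: inner_vec_def power2_eq_square mult_ac)
qed

lemma diag_part_rayleigh_bound:
  fixes S N :: "real^'n^'n"
  assumes S: "symmetric_mat S" and N: "\<And>k. N $ k $ k \<ge> 0" and pos: "(S ** S) $ i $ i > 0"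
  shows "N $ i $ i * (S ** S) $ i $ i \<le> lambda_max (S ** diag_part N ** S)"
proof -
  define L where "L = S ** S"
  define M where "M = S ** diag_part N ** S"
  define y where "y = S *v axis i 1"
  have "symmetric_mat M"
    using S symmetric_diag_part[of N] unfolding M_def symmetric_mat_def
    by (simp add: matrix_transpose_mul matrix_mul_assoc)
  have Sy: "S *v y = L *v axis i 1"
    unfolding y_def L_def by (simp add: matrix_vector_mul_assoc)
  have "y \<bullet> y = axis i 1 \<bullet> (S *v y)"
    unfolding y_def by (rule symmetric_mat_inner_commute[OF S, symmetric])
  also have "\<dots> = L $ i $ i"
    by (simp add: Sy inner_axis' matrix_vector_mult_axis_component)
  finally have yy: "y \<bullet> y = L $ i $ i" .
  have "y \<bullet> (M *v y) = y \<bullet> (S *v (diag_part N *v (S *v y)))"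
    unfolding M_def by (simp add: matrix_vector_mul_assoc matrix_mul_assoc)
  also have "\<dots> = (S *v y) \<bullet> (diag_part N *v (S *v y))"
    by (rule symmetric_mat_inner_commute[OF S])
  also have "\<dots> = (\<Sum>k\<in>UNIV. N $ k $ k * (L $ k $ i)\<^sup>2)"
    by (simp add: Sy diag_part_quadratic_form matrix_vector_mult_axis_component)
  finally have yMy: "y \<bullet> (M *v y) = (\<Sum>k\<in>UNIV. N $ k $ k * (L $ k $ i)\<^sup>2)" .
  have "(N $ i $ i * L $ i $ i) * L $ i $ i = N $ i $ i * (L $ i $ i)\<^sup>2"
    by (simp add: power2_eq_square)
  also have "\<dots> \<le> (\<Sum>k\<in>UNIV. N $ k $ k * (L $ k $ i)\<^sup>2)"
    by (rule member_le_sum) (simp_all add: N)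
  also have "\<dots> \<le> lambda_max M * L $ i $ i"
    using lambda_max_rayleigh[OF \<open>symmetric_mat M\<close>, of y] by (simp add: yMy yy)
  finally show ?thesis
    using pos unfolding L_def M_def by simp
qed

lemma powr_root_le_if_le_power_mult:
  fixes x c y :: real and n :: nat
  assumes "0 \<le> x" "0 \<le> c" "0 \<le> y" "n > 0" "x \<le> c ^ n * y"
  shows "x powr (1 / n) \<le> c * y powr (1 / n)"
proof -
  have root: "(c ^ n) powr (1 / n) = c"
  proof (cases "c = 0")
    case False
    then show ?thesis
      using assms by (simp add: powr_realpow[symmetric] powr_powr)
  qed (use assms in simp)
  have "x powr (1 / n) \<le> (c ^ n * y) powr (1 / n)"
    using assms by (intro powr_mono2) auto
  also have "\<dots> = c * y powr (1 / n)"
    using assms by (simp add: powr_mult root)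
  finally show ?thesis .
qed

theorem proposition2:
  fixes L :: "real^'n^'n"
  assumes "pos_def L"
  shows "lambda_max (mat_sqrt L ** diag_part (matrix_inv L) ** mat_sqrt L)
           * det L powr (1 / real CARD('n))
         \<ge> det (diag_part L) powr (1 / real CARD('n))"
proof -
  define S where "S = mat_sqrt L"
  define N where "N = matrix_inv L"
  define lam where "lam = lambda_max (S ** diag_part N ** S)"
  have S: "symmetric_mat S" "S ** S = L"
    using pos_semidef_mat_sqrt mat_sqrt_mult_self pos_def_imp_pos_semidef[OF assms]
    unfolding S_def pos_semidef_def by auto
  have L_pos: "L $ i $ i > 0" and N_pos: "N $ i $ i > 0" for i
    unfolding N_def using pos_def_diag_pos pos_def_matrix_inv assms by auto
  have bound: "N $ i $ i * L $ i $ i \<le> lam" for i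
    using diag_part_rayleigh_bound[OF S(1), of N i] N_pos L_pos
    unfolding lam_def S(2) by (simp add: less_imp_le)
  have "det (diag_part L) \<le> (\<Prod>i\<in>UNIV. L $ i $ i) * ((\<Prod>i\<in>UNIV. N $ i $ i) * det L)"
    using hadamard_matrix_inv[OF assms] L_pos unfolding N_def det_diag_part by (simp add: prod_pos)
  also have "\<dots> = (\<Prod>i\<in>UNIV. N $ i $ i * L $ i $ i) * det L"
    by (simp add: prod.distrib mult_ac)
  also have "\<dots> \<le> lam ^ CARD('n) * det L"
    using prod_mono[of UNIV "\<lambda>i. N $ i $ i * L $ i $ i" "\<lambda>_. lam"] bound N_pos L_pos
      pos_def_det_pos[OF assms] by (simp add: less_imp_le)
  finally have "det (diag_part L) \<le> lam ^ CARD('n) * det L" .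
  moreover have "0 \<le> det (diag_part L)"
    using L_pos unfolding det_diag_part by (simp add: prod_nonneg less_imp_le)
  moreover have "0 \<le> lam"
    using bound N_pos L_pos by (meson order_trans mult_nonneg_nonneg less_imp_le)
  ultimately show ?thesis
    using powr_root_le_if_le_power_mult[of "det (diag_part L)" lam "det L" "CARD('n)"]
      pos_def_det_pos[OF assms] unfolding lam_def S_def N_def by simp
qed

end
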